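(* Fix a vertex $\mu$, let $\widehat f,\widehat g,\widehat h\in\mathbb Q^\Gamma$, $f=\widehat fV$, and for $i\sim\mu$ put $U_i=\Gamma^\mu_i\setminus\{i\}$. Then $$\big(\widehat f_{\langle\widehat g\rangle[\widehat h]}\big)_i=\begin{cases}\widehat f_\mu-\sum_{\nu\sim\mu}\rho_{[\mu,\nu]}(\mu)\widehat h_\nu & i=\mu,\\ \widehat f_i+\widehat h_i+\sum_{j\in U_i}\rho_{[i,j]}(\mu)\widehat g_j & i\sim\mu,\\ \widehat f_i-\widehat g_i&\text{otherwise.}\end{cases}$$ Moreover, for every vertex $i$, $$(\widehat f_{\langle\widehat g\rangle}V)_i=f_i-\sum_{\nu\sim\mu}\sum_{j\in\Gamma^\mu_\nu}\widehat g_j\,\varphi^{[\nu,j]}_\mu(i)\,V_{\mu,i},\qquad (\widehat f_{[\widehat h]}V)_i=f_i+\sum_{\nu\sim\mu}\widehat h_\nu\,\varphi^{[\mu,\nu]}_\mu(i)\,V_{\mu,i}.$$ Consequently, if $\widehat g\ge0$ then $(\widehat f_{\langle\widehat g\rangle}V)_i\le f_i$ for all $i$, with strict inequality exactly when $i\in\Gamma^\nu_j$ for some $\nu\sim\mu$ and some $j\in\Gamma^\mu_\nu$ with $\widehat g_j>0$ (in particular equality holds when $d(\mu,i)\le1$); and if $\widehat h\ge0$ then $(\widehat f_{[\widehat h]}V)_i\ge f_i$, with strict inequality exactly when $i\in\Gamma^\mu_\nu$ for some $\nu\sim\mu$ with $\widehat h_\nu>0$.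
   Context: Setting: $R$ two-dimensional regular local ring with algebraically closed residue field; $\pi:X=X_{N+1}\to\cdots\to X_1=\operatorname{Spec}R$ a composition of point blowups; $E_\nu$ strict transforms of the exceptional divisors; proximity matrix $P$ ($p_{\mu,\mu}=1$, $p_{\mu,\nu}=-1$ if $x_\mu$ lies on the strict transform on $X_\mu$ of the exceptional divisor of the blowup of $x_\nu$, else $0$), valuation matrix $V=(P^TP)^{-1}$ (symmetric, positive entries). Dual graph $\Gamma$ on vertices $1..N$, $\gamma\sim\eta$ iff $\gamma\ne\eta$ and $E_\gamma\cap E_\eta\neq\emptyset$ (a tree); $d$ graph distance; branch $\Gamma^\mu_\nu$ = maximal connected subgraph containing $\nu$ but not $\mu$ ($\Gamma^\mu_\mu=\emptyset$). $\mathbf 1_i$ is the standard basis vector of $\mathbb Q^\Gamma$; $\rho_{[\alpha,\beta]}(\nu)=V_{\beta,\nu}/V_{\alpha,\nu}$; $\widehat r_{[\alpha,\beta]}=\mathbf 1_\beta-\rho_{[\alpha,\beta]}(\alpha)\mathbf 1_\alpha$; $\varphi^{[\alpha,\beta]}_\eta(\nu)=(\widehat r_{[\alpha,\beta]}V)_\nu/V_{\eta,\nu}$. For the fixed $\mu$: $\widehat f_{\langle\widehat g\rangle[\widehat h]}=\widehat f-\sum_{i\sim\mu}\sum_{j\in\Gamma^\mu_i}\widehat g_j\widehat r_{[i,j]}+\sum_{i\sim\mu}\widehat h_i\widehat r_{[\mu,i]}$; $\widehat f_{\langle\widehat g\rangle}$ and $\widehat f_{[\widehat h]}$ denote the cases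 $\widehat h=0$ and $\widehat g=0$ respectively. *)

theory Defs
  imports Complex_Main
begin

text \<open>
  Points x_1,...,x_N are blown up; x_1 is the closed point of Spec R.  Every closed point of
  X_k (k >= 2) lies on the exceptional locus, i.e. on one curve E_i (a free point of E_i) or on
  the intersection of two curves E_i, E_j (a satellite point).  The choice for x_k is recorded
  by ch k.  Curves are indexed 1..N (E_nu is the strict transform of the exceptional divisor of
  the blowup of x_nu).
\<close>

datatype bchoice = Free nat | Sat nat nat

text \<open>dgraph ch k a b: the curves E_a and E_b (a, b in 1..k) meet on X_(k+1).\<close>
fun dgraph :: "(nat \<Rightarrow> bchoice) \<Rightarrow> nat \<Rightarrow> nat \<Rightarrow> nat \<Rightarrow> bool" where
  "dgraph ch 0 a b = False"
| "dgraph ch (Suc 0) a b = False"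
| "dgraph ch (Suc (Suc k)) a b =
     (case ch (Suc (Suc k)) of
        Free i \<Rightarrow> dgraph ch (Suc k) a b \<or> (a = Suc (Suc k) \<and> b = i) \<or> (a = i \<and> b = Suc (Suc k))
      | Sat i j \<Rightarrow> (dgraph ch (Suc k) a b \<and> \<not> ({a, b} = {i, j}))
                  \<or> (a = Suc (Suc k) \<and> (b = i \<or> b = j))
                  \<or> (b = Suc (Suc k) \<and> (a = i \<or> a = j)))"

definition valid_blowups :: "nat \<Rightarrow> (nat \<Rightarrow> bchoice) \<Rightarrow> bool" where
  "valid_blowups N ch \<longleftrightarrow>
     (\<forall>k\<in>{2..N}. case ch k of
        Free i \<Rightarrow> 1 \<le> i \<and> i < k
      | Sat i j \<Rightarrow> 1 \<le> i \<and> i < k \<and> 1 \<le> j \<and> j < k \<and> i \<noteq> j \<and> dgraph ch (k - 1) i j)"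

text \<open>x_k lies on the strict transform on X_k of the exceptional divisor of the blowup of x_i.\<close>
definition proximate :: "(nat \<Rightarrow> bchoice) \<Rightarrow> nat \<Rightarrow> nat \<Rightarrow> bool" where
  "proximate ch k i \<longleftrightarrow> 2 \<le> k \<and> (case ch k of Free a \<Rightarrow> i = a | Sat a b \<Rightarrow> i = a \<or> i = b)"

definition proxmat :: "(nat \<Rightarrow> bchoice) \<Rightarrow> nat \<Rightarrow> nat \<Rightarrow> rat" where
  "proxmat ch m n = (if m = n then 1 else if proximate ch m n then -1 else 0)"

definition PtP :: "nat \<Rightarrow> (nat \<Rightarrow> bchoice) \<Rightarrow> nat \<Rightarrow> nat \<Rightarrow> rat" where
  "PtP N ch a b = (\<Sum>c\<in>{1..N}. proxmat ch c a * proxmat ch c b)"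

definition is_valuation_matrix :: "nat \<Rightarrow> (nat \<Rightarrow> bchoice) \<Rightarrow> (nat \<Rightarrow> nat \<Rightarrow> rat) \<Rightarrow> bool" where
  "is_valuation_matrix N ch V \<longleftrightarrow>
     (\<forall>a\<in>{1..N}. \<forall>b\<in>{1..N}.
        (\<Sum>c\<in>{1..N}. PtP N ch a c * V c b) = (if a = b then 1 else 0) \<and>
        (\<Sum>c\<in>{1..N}. V a c * PtP N ch c b) = (if a = b then 1 else 0))"

definition nbrs :: "nat \<Rightarrow> (nat \<Rightarrow> bchoice) \<Rightarrow> nat \<Rightarrow> nat set" where
  "nbrs N ch m = {i\<in>{1..N}. i \<noteq> m \<and> dgraph ch N m i}"

definition branch :: "nat \<Rightarrow> (nat \<Rightarrow> bchoice) \<Rightarrow> nat \<Rightarrow> nat \<Rightarrow> nat set" where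
  "branch N ch m n =
     (let S = {1..N} - {m};
          E = {(a, b). a \<in> S \<and> b \<in> S \<and> a \<noteq> b \<and> dgraph ch N a b}
      in if n \<in> S then {w. (n, w) \<in> E\<^sup>*} else {})"

definition vecmat :: "nat \<Rightarrow> (nat \<Rightarrow> rat) \<Rightarrow> (nat \<Rightarrow> nat \<Rightarrow> rat) \<Rightarrow> nat \<Rightarrow> rat" where
  "vecmat N x V n = (\<Sum>a\<in>{1..N}. x a * V a n)"

definition unitv :: "nat \<Rightarrow> nat \<Rightarrow> rat" where
  "unitv i k = (if k = i then 1 else 0)"

definition rho :: "(nat \<Rightarrow> nat \<Rightarrow> rat) \<Rightarrow> nat \<Rightarrow> nat \<Rightarrow> nat \<Rightarrow> rat" where
  "rho V a b n = V b n / V a n"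

definition rhat :: "(nat \<Rightarrow> nat \<Rightarrow> rat) \<Rightarrow> nat \<Rightarrow> nat \<Rightarrow> nat \<Rightarrow> rat" where
  "rhat V a b k = unitv b k - rho V a b a * unitv a k"

definition phi :: "nat \<Rightarrow> (nat \<Rightarrow> nat \<Rightarrow> rat) \<Rightarrow> nat \<Rightarrow> nat \<Rightarrow> nat \<Rightarrow> nat \<Rightarrow> rat" where
  "phi N V a b e n = vecmat N (rhat V a b) V n / V e n"

definition fmod :: "nat \<Rightarrow> (nat \<Rightarrow> bchoice) \<Rightarrow> (nat \<Rightarrow> nat \<Rightarrow> rat) \<Rightarrow> nat
    \<Rightarrow> (nat \<Rightarrow> rat) \<Rightarrow> (nat \<Rightarrow> rat) \<Rightarrow> (nat \<Rightarrow> rat) \<Rightarrow> nat \<Rightarrow> rat" where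
  "fmod N ch V m fh gh hh k =
     fh k - (\<Sum>i\<in>nbrs N ch m. \<Sum>j\<in>branch N ch m i. gh j * rhat V i j k)
          + (\<Sum>i\<in>nbrs N ch m. hh i * rhat V m i k)"

end

theory Submission
  imports Defs
begin

text \<open>
  The dual graph is a tree, and K = P^T P is a positive definite matrix whose off-diagonal
  entries are -1 on the edges of the tree and 0 elsewhere. Since V is the inverse of K, a vector
  D = x V satisfies D K = x, and positive definiteness together with the sign pattern of K yields
  a discrete maximum principle: if D K \<ge> 0 on S and D = 0 off S, then D \<ge> 0, and D > 0 on every
  part of S connected to a vertex where D K > 0. For D = rhat_[\<alpha>,\<beta>] V, which vanishes at \<alpha> by
  the choice of \<rho>, this shows that rhat_[\<alpha>,\<beta>] V is positive on the branch \<Gamma>^\<alpha>_\<beta> and zero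
  elsewhere; in particular \<rho>_[\<alpha>,\<beta>] is constant outside that branch. Everything else follows
  by linearity, using that the branches at \<mu> are disjoint and cover all vertices other than \<mu>.
\<close>

section \<open>The dual graph is a tree\<close>

lemma rtrancl_map:
  assumes "(x, y) \<in> R\<^sup>*" and "\<And>u v. (u, v) \<in> R \<Longrightarrow> f u = f v \<or> (f u, f v) \<in> S"
  shows "(f x, f y) \<in> S\<^sup>*"
  using assms(1)
proof (induction rule: rtrancl_induct)
  case (step y z)
  with assms(2)[OF step(2)] show ?case by (metis rtrancl.rtrancl_into_rtrancl)
qed simp

text \<open>Acyclicity is inherited by merging the new vertex into an old one: a path avoiding
  an edge of the enlarged graph maps to a path avoiding the corresponding old edge.\<close>
lemma path_avoiding_edge_map:
  assumes "(a, b) \<in> {(x, y). g' x y \<and> {x, y} \<noteq> {a, b}}\<^sup>*"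
    and "\<And>u v. g' u v \<Longrightarrow> {u, v} \<noteq> {a, b} \<Longrightarrow>
           f u = f v \<or> (g (f u) (f v) \<and> {f u, f v} \<noteq> {f a, f b})"
  shows "(f a, f b) \<in> {(x, y). g x y \<and> {x, y} \<noteq> {f a, f b}}\<^sup>*"
  using assms by (intro rtrancl_map[OF assms(1)]) auto

definition tree_on :: "(nat \<Rightarrow> nat \<Rightarrow> bool) \<Rightarrow> nat \<Rightarrow> bool" where
  "tree_on g k \<longleftrightarrow>
     (\<forall>a b. g a b \<longrightarrow> a \<in> {1..k} \<and> b \<in> {1..k} \<and> a \<noteq> b \<and> g b a)
   \<and> (\<forall>x\<in>{1..k}. (1, x) \<in> {(u, v). g u v}\<^sup>*)
   \<and> (\<forall>a b. g a b \<longrightarrow> (a, b) \<notin> {(x, y). g x y \<and> {x, y} \<noteq> {a, b}}\<^sup>*)"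

lemma add_leaf_bridge:
  assumes T: "tree_on g k" and i: "i \<in> {1..k}"
    and g': "\<And>a b. g' a b \<longleftrightarrow> g a b \<or> (a = Suc k \<and> b = i) \<or> (a = i \<and> b = Suc k)"
    and ab: "g' a b"
  shows "(a, b) \<notin> {(x, y). g' x y \<and> {x, y} \<noteq> {a, b}}\<^sup>*"
proof
  have edge: "\<And>a b. g a b \<Longrightarrow> a \<in> {1..k} \<and> b \<in> {1..k} \<and> a \<noteq> b \<and> g b a"
    and bridge: "\<And>a b. g a b \<Longrightarrow> (a, b) \<notin> {(x, y). g x y \<and> {x, y} \<noteq> {a, b}}\<^sup>*"
    using T unfolding tree_on_def by blast+
  assume p: "(a, b) \<in> {(x, y). g' x y \<and> {x, y} \<noteq> {a, b}}\<^sup>*"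
  show False
  proof (cases "g a b")
    case True
    let ?f = "\<lambda>x. if x = Suc k then i else x"
    have "?f a = a" "?f b = b" using edge[OF True] by auto
    moreover have "(?f a, ?f b) \<in> {(x, y). g x y \<and> {x, y} \<noteq> {?f a, ?f b}}\<^sup>*"
    proof (rule path_avoiding_edge_map[OF p])
      fix u v assume uv: "g' u v" "{u, v} \<noteq> {a, b}"
      show "?f u = ?f v \<or> (g (?f u) (?f v) \<and> {?f u, ?f v} \<noteq> {?f a, ?f b})"
      proof (cases "g u v")
        case True
        then show ?thesis using edge[OF True] uv \<open>?f a = a\<close> \<open>?f b = b\<close> by auto
      qed (use uv g' in auto)
    qed
    ultimately show False using bridge[OF True] by simp
  next
    case False
    then have ab': "{a, b} = {Suc k, i}" using ab g' by auto
    let ?f = "\<lambda>x. x = Suc k"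
    have "(?f a, ?f b) \<in> {(x, y). False \<and> {x, y} \<noteq> {?f a, ?f b}}\<^sup>*"
    proof (rule path_avoiding_edge_map[OF p])
      fix u v assume uv: "g' u v" "{u, v} \<noteq> {a, b}"
      then have "g u v" using ab' g' by (auto simp: insert_commute)
      then have "u \<noteq> Suc k" "v \<noteq> Suc k" using edge by fastforce+
      then show "?f u = ?f v \<or> (False \<and> {?f u, ?f v} \<noteq> {?f a, ?f b})" by simp
    qed
    then show False using ab' i by (auto simp: doubleton_eq_iff)
  qed
qed

lemma tree_on_add_leaf:
  assumes T: "tree_on g k" and i: "i \<in> {1..k}"
  shows "tree_on (\<lambda>a b. g a b \<or> (a = Suc k \<and> b = i) \<or> (a = i \<and> b = Suc k)) (Suc k)"
    (is "tree_on ?g _")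
proof -
  have edge: "\<And>a b. g a b \<Longrightarrow> a \<in> {1..k} \<and> b \<in> {1..k} \<and> a \<noteq> b \<and> g b a"
    and conn: "\<And>x. x \<in> {1..k} \<Longrightarrow> (1, x) \<in> {(u, v). g u v}\<^sup>*"
    using T unfolding tree_on_def by blast+
  have sub: "{(u, v). g u v}\<^sup>* \<subseteq> {(u, v). ?g u v}\<^sup>*"
    by (rule rtrancl_mono) auto
  have "(1, x) \<in> {(u, v). ?g u v}\<^sup>*" if x: "x \<in> {1..Suc k}" for x
  proof (cases "x = Suc k")
    case True
    have "(1, i) \<in> {(u, v). ?g u v}\<^sup>*" using conn[OF i] sub by blast
    then show ?thesis using True by (auto intro: rtrancl_into_rtrancl)
  next
    case False
    then show ?thesis using x conn sub by fastforce
  qed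
  moreover have "(a, b) \<notin> {(x, y). ?g x y \<and> {x, y} \<noteq> {a, b}}\<^sup>*" if "?g a b" for a b
    using add_leaf_bridge[OF T i, of ?g a b] that by simp
  ultimately show ?thesis using edge i unfolding tree_on_def by fastforce
qed

lemma subdivide_edge_old_bridge:
  assumes T: "tree_on g k" and gij: "g i j"
    and g': "\<And>a b. g' a b \<longleftrightarrow>
      (g a b \<and> {a, b} \<noteq> {i, j}) \<or> (a = Suc k \<and> (b = i \<or> b = j)) \<or> (b = Suc k \<and> (a = i \<or> a = j))"
    and ab: "g a b" "{a, b} \<noteq> {i, j}"
  shows "(a, b) \<notin> {(x, y). g' x y \<and> {x, y} \<noteq> {a, b}}\<^sup>*"
proof
  have edge: "\<And>a b. g a b \<Longrightarrow> a \<in> {1..k} \<and> b \<in> {1..k} \<and> a \<noteq> b \<and> g b a"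
    and bridge: "\<And>a b. g a b \<Longrightarrow> (a, b) \<notin> {(x, y). g x y \<and> {x, y} \<noteq> {a, b}}\<^sup>*"
    using T unfolding tree_on_def by blast+
  assume p: "(a, b) \<in> {(x, y). g' x y \<and> {x, y} \<noteq> {a, b}}\<^sup>*"
  let ?f = "\<lambda>x. if x = Suc k then i else x"
  have "a \<noteq> Suc k" "b \<noteq> Suc k" using edge ab by fastforce+
  then have fab: "?f a = a" "?f b = b" by simp_all
  have "(?f a, ?f b) \<in> {(x, y). g x y \<and> {x, y} \<noteq> {?f a, ?f b}}\<^sup>*"
  proof (rule path_avoiding_edge_map[OF p])
    fix u v assume uv: "g' u v" "{u, v} \<noteq> {a, b}"
    show "?f u = ?f v \<or> (g (?f u) (?f v) \<and> {?f u, ?f v} \<noteq> {?f a, ?f b})"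
    proof (cases "g u v \<and> {u, v} \<noteq> {i, j}")
      case True
      then have "u \<noteq> Suc k" "v \<noteq> Suc k" using edge by fastforce+
      then show ?thesis using True uv fab by simp
    next
      case False
      then have "(u = Suc k \<and> (v = i \<or> v = j)) \<or> (v = Suc k \<and> (u = i \<or> u = j))"
        using uv g' by auto
      moreover have "i \<noteq> Suc k" "j \<noteq> Suc k" using edge[OF gij] by auto
      ultimately show ?thesis using gij edge[OF gij] ab fab by (auto simp: insert_commute)
    qed
  qed
  then show False using bridge[OF ab(1)] fab by simp
qed

lemma subdivide_edge_new_bridge:
  assumes T: "tree_on g k" and gij: "g i j"
    and g': "\<And>a b. g' a b \<longleftrightarrow>
      (g a b \<and> {a, b} \<noteq> {i, j}) \<or> (a = Suc k \<and> (b = i \<or> b = j)) \<or> (b = Suc k \<and> (a = i \<or> a = j))"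
    and cd: "{a, b} = {Suc k, c}" "{c, d} = {i, j}" "c \<noteq> d"
  shows "(a, b) \<notin> {(x, y). g' x y \<and> {x, y} \<noteq> {a, b}}\<^sup>*"
proof
  have edge: "\<And>a b. g a b \<Longrightarrow> a \<in> {1..k} \<and> b \<in> {1..k} \<and> a \<noteq> b \<and> g b a"
    and bridge: "\<And>a b. g a b \<Longrightarrow> (a, b) \<notin> {(x, y). g x y \<and> {x, y} \<noteq> {a, b}}\<^sup>*"
    using T unfolding tree_on_def by blast+
  assume p: "(a, b) \<in> {(x, y). g' x y \<and> {x, y} \<noteq> {a, b}}\<^sup>*"
  have gcd: "g c d" "g d c" using cd gij edge[OF gij] by (auto simp: doubleton_eq_iff)
  have cdk: "c \<noteq> Suc k" "d \<noteq> Suc k" using edge gcd by fastforce+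
  \<comment> \<open>merge the new vertex into d, the end of {c, d} not on the avoided edge\<close>
  let ?f = "\<lambda>x. if x = Suc k then d else x"
  have fab: "{?f a, ?f b} = {c, d}" using cd cdk by (auto simp: doubleton_eq_iff)
  have "(?f a, ?f b) \<in> {(x, y). g x y \<and> {x, y} \<noteq> {?f a, ?f b}}\<^sup>*"
  proof (rule path_avoiding_edge_map[OF p])
    fix u v assume uv: "g' u v" "{u, v} \<noteq> {a, b}"
    show "?f u = ?f v \<or> (g (?f u) (?f v) \<and> {?f u, ?f v} \<noteq> {?f a, ?f b})"
    proof (cases "g u v \<and> {u, v} \<noteq> {i, j}")
      case True
      then have "u \<noteq> Suc k" "v \<noteq> Suc k" using edge by fastforce+
      then show ?thesis using True fab cd by simp
    next
      case False
      then have "(u = Suc k \<and> v = d) \<or> (v = Suc k \<and> u = d)"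
        using uv cd g' by (auto simp: doubleton_eq_iff)
      then show ?thesis by auto
    qed
  qed
  moreover have "(?f a = c \<and> ?f b = d) \<or> (?f a = d \<and> ?f b = c)"
    using fab cd(3) by (auto simp: doubleton_eq_iff)
  ultimately show False using bridge[OF gcd(1)] bridge[OF gcd(2)] fab by (auto simp: insert_commute)
qed

lemma tree_on_subdivide_edge:
  assumes T: "tree_on g k" and gij: "g i j"
  shows "tree_on (\<lambda>a b. (g a b \<and> {a, b} \<noteq> {i, j})
                    \<or> (a = Suc k \<and> (b = i \<or> b = j)) \<or> (b = Suc k \<and> (a = i \<or> a = j))) (Suc k)"
    (is "tree_on ?g _")
proof -
  have edge: "\<And>a b. g a b \<Longrightarrow> a \<in> {1..k} \<and> b \<in> {1..k} \<and> a \<noteq> b \<and> g b a"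
    and conn: "\<And>x. x \<in> {1..k} \<Longrightarrow> (1, x) \<in> {(u, v). g u v}\<^sup>*"
    using T unfolding tree_on_def by blast+
  have ij: "i \<in> {1..k}" "j \<in> {1..k}" "i \<noteq> j" "g j i" using edge[OF gij] by auto
  have sym: "?g a b \<Longrightarrow> a \<in> {1..Suc k} \<and> b \<in> {1..Suc k} \<and> a \<noteq> b \<and> ?g b a" for a b
  proof -
    assume "?g a b"
    then consider "g a b" "{a, b} \<noteq> {i, j}" | "a = Suc k" "b = i \<or> b = j"
      | "b = Suc k" "a = i \<or> a = j"
      by blast
    then show ?thesis
    proof cases
      case 1
      then show ?thesis using edge[of a b] by (auto simp: insert_commute)
    qed (use ij in auto)
  qed
  have "{(u, v). g u v} \<subseteq> {(u, v). ?g u v}\<^sup>*"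
  proof (clarify)
    fix u v assume "g u v"
    show "(u, v) \<in> {(u, v). ?g u v}\<^sup>*"
    proof (cases "{u, v} = {i, j}")
      case True
      have "(u, Suc k) \<in> {(u, v). ?g u v}" "(Suc k, v) \<in> {(u, v). ?g u v}"
        using True by (auto simp: doubleton_eq_iff)
      then show ?thesis by (meson converse_rtrancl_into_rtrancl r_into_rtrancl)
    qed (use \<open>g u v\<close> in auto)
  qed
  then have sub: "{(u, v). g u v}\<^sup>* \<subseteq> {(u, v). ?g u v}\<^sup>*"
    by (rule rtrancl_subset_rtrancl)
  have "(1, x) \<in> {(u, v). ?g u v}\<^sup>*" if x: "x \<in> {1..Suc k}" for x
  proof (cases "x = Suc k")
    case True
    have "(1, i) \<in> {(u, v). ?g u v}\<^sup>*" using conn ij sub by blast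
    then show ?thesis using True by (auto intro: rtrancl_into_rtrancl)
  next
    case False
    then show ?thesis using x conn sub by fastforce
  qed
  moreover have "(a, b) \<notin> {(x, y). ?g x y \<and> {x, y} \<noteq> {a, b}}\<^sup>*" if ab: "?g a b" for a b
  proof (cases "g a b \<and> {a, b} \<noteq> {i, j}")
    case True
    then show ?thesis using subdivide_edge_old_bridge[OF T gij, of ?g] by simp
  next
    case False
    then obtain c d where "{a, b} = {Suc k, c}" "{c, d} = {i, j}" "c \<noteq> d"
      using ab ij by (auto simp: insert_commute)
    then show ?thesis using subdivide_edge_new_bridge[OF T gij, of ?g] by simp
  qed
  ultimately show ?thesis using sym unfolding tree_on_def by blast
qed

lemma valid_blowups_Suc:
  assumes "valid_blowups N ch" and "Suc k \<le> N" and "1 \<le> k"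
  shows "case ch (Suc k) of Free i \<Rightarrow> i \<in> {1..k}
      | Sat i j \<Rightarrow> i \<in> {1..k} \<and> j \<in> {1..k} \<and> i \<noteq> j \<and> dgraph ch k i j"
proof -
  have "Suc k \<in> {2..N}" using assms(2,3) by simp
  then have "case ch (Suc k) of Free i \<Rightarrow> 1 \<le> i \<and> i < Suc k
      | Sat i j \<Rightarrow> 1 \<le> i \<and> i < Suc k \<and> 1 \<le> j \<and> j < Suc k \<and> i \<noteq> j \<and> dgraph ch (Suc k - 1) i j"
    using assms(1) unfolding valid_blowups_def by blast
  then show ?thesis by (auto split: bchoice.split)
qed

lemma dgraph_Suc:
  assumes "1 \<le> k"
  shows "dgraph ch (Suc k) = (\<lambda>a b. case ch (Suc k) of
        Free i \<Rightarrow> dgraph ch k a b \<or> (a = Suc k \<and> b = i) \<or> (a = i \<and> b = Suc k)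
      | Sat i j \<Rightarrow> (dgraph ch k a b \<and> {a, b} \<noteq> {i, j})
                  \<or> (a = Suc k \<and> (b = i \<or> b = j)) \<or> (b = Suc k \<and> (a = i \<or> a = j)))"
proof -
  obtain k' where "k = Suc k'" using assms by (cases k) auto
  show ?thesis unfolding \<open>k = Suc k'\<close> by (intro ext) simp
qed

lemma tree_on_dgraph:
  assumes valid: "valid_blowups N ch" and "k \<le> N"
  shows "tree_on (dgraph ch k) k"
  using assms(2)
proof (induction k)
  case (Suc k)
  show ?case
  proof (cases "k = 0")
    case False
    then have k: "1 \<le> k" by simp
    have T: "tree_on (dgraph ch k) k" using Suc by simp
    have step: "case ch (Suc k) of Free i \<Rightarrow> i \<in> {1..k}
      | Sat i j \<Rightarrow> i \<in> {1..k} \<and> j \<in> {1..k} \<and> i \<noteq> j \<and> dgraph ch k i j"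
      using valid_blowups_Suc[OF valid Suc.prems k] .
    show ?thesis
    proof (cases "ch (Suc k)")
      case (Free i)
      then show ?thesis using tree_on_add_leaf[OF T, of i] step by (simp add: dgraph_Suc[OF k])
    next
      case (Sat i j)
      then show ?thesis using tree_on_subdivide_edge[OF T, of i j] step by (simp add: dgraph_Suc[OF k])
    qed
  qed (simp add: tree_on_def)
qed (simp add: tree_on_def)

section \<open>The matrix P^T P\<close>

lemma proximate_less:
  assumes "valid_blowups N ch" and "c \<le> N" and "proximate ch c a"
  shows "1 \<le> a \<and> a < c"
proof -
  obtain k where c: "c = Suc k" "1 \<le> k"
    using assms(3) unfolding proximate_def by (cases c) auto
  show ?thesis
    using valid_blowups_Suc[OF assms(1) assms(2)[unfolded c(1)] c(2)] assms(3) c(1)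
    unfolding proximate_def by (cases "ch c") auto
qed

lemma proxmat_eq_0_if_less:
  assumes "valid_blowups N ch" and "c \<le> N" and "c < a"
  shows "proxmat ch c a = 0"
  using proximate_less[OF assms(1,2)] assms(3) unfolding proxmat_def by force

lemma proxmat_Suc:
  assumes "1 \<le> k" and "x \<noteq> Suc k"
  shows "proxmat ch (Suc k) x =
           (if (case ch (Suc k) of Free i \<Rightarrow> x = i | Sat i j \<Rightarrow> x = i \<or> x = j) then -1 else 0)"
  using assms unfolding proxmat_def proximate_def by (simp split: bchoice.split)

lemma PtP_Suc:
  "PtP (Suc k) ch a b = PtP k ch a b + proxmat ch (Suc k) a * proxmat ch (Suc k) b"
  unfolding PtP_def by (simp add: sum.cl_ivl_Suc)

lemma PtP_new_vertex:
  assumes "valid_blowups N ch" and "Suc k \<le> N" and "x \<in> {1..k}"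
  shows "PtP k ch (Suc k) x = 0"
  unfolding PtP_def using proxmat_eq_0_if_less[OF assms(1)] assms(2) by (intro sum.neutral) auto

lemma PtP_off_diagonal:
  assumes valid: "valid_blowups N ch"
  shows "k \<le> N \<Longrightarrow> a \<in> {1..k} \<Longrightarrow> b \<in> {1..k} \<Longrightarrow> a \<noteq> b \<Longrightarrow>
     PtP k ch a b = (if dgraph ch k a b then -1 else 0)"
proof (induction k arbitrary: a b)
  case (Suc k)
  show ?case
  proof (cases k)
    case 0
    then show ?thesis using Suc.prems by auto
  next
    case (Suc k')
    have k: "1 \<le> k" using Suc by simp
    have edge: "\<And>a b. dgraph ch k a b \<Longrightarrow> a \<in> {1..k} \<and> b \<in> {1..k} \<and> a \<noteq> b \<and> dgraph ch k b a"
      using tree_on_dgraph[OF valid, of k] Suc.prems unfolding tree_on_def by auto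
    have step: "case ch (Suc k) of Free i \<Rightarrow> i \<in> {1..k}
      | Sat i j \<Rightarrow> i \<in> {1..k} \<and> j \<in> {1..k} \<and> i \<noteq> j \<and> dgraph ch k i j"
      using valid_blowups_Suc[OF valid Suc.prems(1) k] .
    note dgraph_Suc = dgraph_Suc[OF k, of ch]
    consider "a \<in> {1..k}" "b \<in> {1..k}" | "a = Suc k" "b \<in> {1..k}" | "b = Suc k" "a \<in> {1..k}"
      using Suc.prems by fastforce
    then show ?thesis
    proof cases
      case 1
      then have IH: "PtP k ch a b = (if dgraph ch k a b then -1 else 0)"
        using Suc.IH Suc.prems by simp
      have ab: "a \<noteq> Suc k" "b \<noteq> Suc k" using 1 by auto
      show ?thesis
      proof (cases "ch (Suc k)")
        case (Free i)
        then show ?thesis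
          using IH PtP_Suc[of k ch a b] proxmat_Suc[OF k ab(1)] proxmat_Suc[OF k ab(2)]
            dgraph_Suc Suc.prems(4) ab by auto
      next
        case (Sat i j)
        have "dgraph ch k a b" if "{a, b} = {i, j}"
          using that step Sat edge by (auto simp: doubleton_eq_iff)
        then show ?thesis
          using IH PtP_Suc[of k ch a b] proxmat_Suc[OF k ab(1)] proxmat_Suc[OF k ab(2)]
            dgraph_Suc Suc.prems(4) ab Sat by (auto simp: doubleton_eq_iff)
      qed
    next
      case 2
      then have "PtP (Suc k) ch a b = proxmat ch (Suc k) b"
        using PtP_Suc[of k ch a b] PtP_new_vertex[OF valid] Suc.prems by (simp add: proxmat_def)
      moreover have "\<not> dgraph ch k a b" using edge[of a b] 2 by auto
      ultimately show ?thesis using proxmat_Suc[OF k, of b] dgraph_Suc 2 step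
        by (cases "ch (Suc k)") auto
    next
      case 3
      then have "PtP (Suc k) ch a b = proxmat ch (Suc k) a"
        using PtP_Suc[of k ch a b] PtP_new_vertex[OF valid] Suc.prems
        by (simp add: proxmat_def PtP_def mult.commute)
      moreover have "\<not> dgraph ch k a b" using edge[of a b] 3 by auto
      ultimately show ?thesis using proxmat_Suc[OF k, of a] dgraph_Suc 3 step
        by (cases "ch (Suc k)") auto
    qed
  qed
qed simp

lemma PtP_quadratic_form:
  "(\<Sum>a\<in>{1..N}. \<Sum>b\<in>{1..N}. x a * PtP N ch a b * x b)
   = (\<Sum>c\<in>{1..N}. (\<Sum>a\<in>{1..N}. proxmat ch c a * x a)\<^sup>2)"
proof -
  have "(\<Sum>a\<in>{1..N}. \<Sum>b\<in>{1..N}. x a * PtP N ch a b * x b)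
      = (\<Sum>a\<in>{1..N}. \<Sum>b\<in>{1..N}. \<Sum>c\<in>{1..N}. (proxmat ch c a * x a) * (proxmat ch c b * x b))"
    unfolding PtP_def by (simp add: sum_distrib_left sum_distrib_right algebra_simps)
  also have "\<dots> = (\<Sum>c\<in>{1..N}. \<Sum>a\<in>{1..N}. \<Sum>b\<in>{1..N}. (proxmat ch c a * x a) * (proxmat ch c b * x b))"
    by (subst sum.swap) (rule sum.cong[OF refl], rule sum.swap)
  also have "\<dots> = (\<Sum>c\<in>{1..N}. (\<Sum>a\<in>{1..N}. proxmat ch c a * x a)\<^sup>2)"
    by (simp add: power2_eq_square sum_product)
  finally show ?thesis .
qed

lemma PtP_posdef:
  assumes valid: "valid_blowups N ch"
    and le: "(\<Sum>a\<in>{1..N}. \<Sum>b\<in>{1..N}. x a * PtP N ch a b * x b) \<le> 0"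
  shows "c \<in> {1..N} \<Longrightarrow> x c = 0"
proof (induction c rule: less_induct)
  case (less c)
  have "(\<Sum>c\<in>{1..N}. (\<Sum>a\<in>{1..N}. proxmat ch c a * x a)\<^sup>2) = 0"
    using le unfolding PtP_quadratic_form by (meson antisym sum_nonneg zero_le_power2)
  then have "(\<Sum>a\<in>{1..N}. proxmat ch c a * x a) = 0"
    using less.prems by (subst (asm) sum_nonneg_eq_0_iff) auto
  \<comment> \<open>the proximity matrix is lower unitriangular\<close>
  moreover have "proxmat ch c a * x a = (if a = c then x a else 0)" if "a \<in> {1..N}" for a
  proof (cases "a < c")
    case True
    then show ?thesis using less that by auto
  next
    case False
    then show ?thesis using proxmat_eq_0_if_less[OF valid, of c a] less.prems
      by (cases "a = c") (auto simp: proxmat_def)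
  qed
  ultimately show "x c = 0" using less.prems by simp
qed

section \<open>A discrete maximum principle\<close>

locale posdef_Z_matrix =
  fixes N :: nat and K :: "nat \<Rightarrow> nat \<Rightarrow> rat"
  assumes posdef: "(\<Sum>a\<in>{1..N}. \<Sum>b\<in>{1..N}. x a * K a b * x b) \<le> 0 \<Longrightarrow> a \<in> {1..N} \<Longrightarrow> x a = 0"
    and off_diagonal_nonpos: "a \<in> {1..N} \<Longrightarrow> b \<in> {1..N} \<Longrightarrow> a \<noteq> b \<Longrightarrow> K a b \<le> 0"
begin

lemma zero_if_vecmat_zero:
  assumes C: "C \<subseteq> {1..N}" and zero: "\<And>k. k \<in> C \<Longrightarrow> vecmat N D K k = 0"
    and decoupled: "\<And>l k. l \<in> {1..N} - C \<Longrightarrow> k \<in> C \<Longrightarrow> D l * K l k = 0" and k: "k \<in> C"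
  shows "D k = 0"
proof -
  define x where "x k = (if k \<in> C then D k else 0)" for k
  \<comment> \<open>x K x = \<Sum>b. (D K)_b x_b = 0, as D K = 0 on C and D does not couple C to its complement\<close>
  have "(\<Sum>a\<in>{1..N}. x a * K a b * x b) = 0" if b: "b \<in> {1..N}" for b
  proof (cases "b \<in> C")
    case True
    have "(\<Sum>a\<in>{1..N}. x a * K a b * x b) = vecmat N D K b * x b"
      unfolding vecmat_def sum_distrib_right
      by (rule sum.cong) (use decoupled True in \<open>auto simp: x_def\<close>)
    then show ?thesis using zero True by simp
  qed (simp add: x_def)
  then have "(\<Sum>a\<in>{1..N}. \<Sum>b\<in>{1..N}. x a * K a b * x b) \<le> 0"
    by (subst sum.swap) simp
  then have "x k = 0" using posdef C k by blast
  then show ?thesis using k by (simp add: x_def)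
qed

lemma nonneg_if_vecmat_nonneg:
  assumes zero: "\<And>k. k \<in> {1..N} \<Longrightarrow> k \<notin> S \<Longrightarrow> D k = 0"
    and nonneg: "\<And>k. k \<in> S \<Longrightarrow> 0 \<le> vecmat N D K k" and k: "k \<in> {1..N}"
  shows "0 \<le> D k"
proof -
  define Dp where "Dp k = max 0 (D k)" for k
  define Dn where "Dn k = max 0 (- D k)" for k
  have D: "D k = Dp k - Dn k" for k by (simp add: Dp_def Dn_def max_def)
  \<comment> \<open>Dn K Dn = Dp K Dn - (D K) Dn \<le> 0: Dp and Dn have disjoint supports and D K \<ge> 0 where Dn > 0\<close>
  have "(\<Sum>b\<in>{1..N}. Dn b * vecmat N D K b)
     = (\<Sum>b\<in>{1..N}. \<Sum>a\<in>{1..N}. Dn b * Dp a * K a b)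
       - (\<Sum>b\<in>{1..N}. \<Sum>a\<in>{1..N}. Dn a * K a b * Dn b)"
    unfolding vecmat_def sum_distrib_left sum_subtractf[symmetric]
    by (rule sum.cong[OF refl], rule sum.cong[OF refl]) (simp add: D algebra_simps)
  moreover have "(\<Sum>b\<in>{1..N}. \<Sum>a\<in>{1..N}. Dn b * Dp a * K a b) \<le> 0"
  proof (intro sum_nonpos)
    fix b a assume "b \<in> {1..N}" "a \<in> {1..N}"
    then show "Dn b * Dp a * K a b \<le> 0"
      using off_diagonal_nonpos[of a b]
      by (cases "a = b") (auto simp: Dp_def Dn_def max_def mult_nonneg_nonpos)
  qed
  moreover have "0 \<le> (\<Sum>b\<in>{1..N}. Dn b * vecmat N D K b)"
  proof (rule sum_nonneg)
    fix b assume "b \<in> {1..N}"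
    then show "0 \<le> Dn b * vecmat N D K b"
      using zero[of b] nonneg[of b] by (cases "b \<in> S") (auto simp: Dn_def)
  qed
  ultimately have "(\<Sum>a\<in>{1..N}. \<Sum>b\<in>{1..N}. Dn a * K a b * Dn b) \<le> 0"
    by (subst sum.swap) linarith
  then have "Dn k = 0" using posdef k by blast
  then show ?thesis by (simp add: Dn_def max_def split: if_splits)
qed

lemma vecmat_le_at_zero:
  assumes nonneg: "\<And>n. n \<in> {1..N} \<Longrightarrow> 0 \<le> D n" and y: "y \<in> {1..N}" "D y = 0"
    and A: "A \<subseteq> {1..N}"
  shows "vecmat N D K y \<le> (\<Sum>n\<in>A. D n * K n y)"
proof -
  have "vecmat N D K y = (\<Sum>n\<in>{1..N} - A. D n * K n y) + (\<Sum>n\<in>A. D n * K n y)"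
    unfolding vecmat_def using A by (simp add: sum.subset_diff)
  moreover have "(\<Sum>n\<in>{1..N} - A. D n * K n y) \<le> 0"
  proof (rule sum_nonpos)
    fix n assume "n \<in> {1..N} - A"
    then show "D n * K n y \<le> 0"
      using nonneg[of n] off_diagonal_nonpos[of n y] y
      by (cases "n = y") (auto simp: mult_nonneg_nonpos)
  qed
  ultimately show ?thesis by simp
qed

lemma pos_if_vecmat_pos:
  assumes S: "S \<subseteq> {1..N}" and b: "b \<in> S"
    and zero: "\<And>k. k \<in> {1..N} \<Longrightarrow> k \<notin> S \<Longrightarrow> D k = 0"
    and nonneg: "\<And>k. k \<in> S \<Longrightarrow> 0 \<le> vecmat N D K k"
    and pos: "0 < vecmat N D K b"
    and path: "(b, k) \<in> {(x, y). x \<in> S \<and> y \<in> S \<and> K x y < 0}\<^sup>*"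
  shows "0 < D k"
proof -
  have D_nonneg: "0 \<le> D n" if "n \<in> {1..N}" for n
    using nonneg_if_vecmat_nonneg zero nonneg that by blast
  have "0 < D b"
  proof (rule ccontr)
    assume "\<not> 0 < D b"
    then have "D b = 0" using D_nonneg[of b] b S by force
    then have "vecmat N D K b \<le> 0" using vecmat_le_at_zero[of D b "{}"] D_nonneg b S by auto
    then show False using pos by simp
  qed
  from path show ?thesis
  proof (induction rule: rtrancl_induct)
    case (step x y)
    then have xy: "x \<in> S" "y \<in> S" "K x y < 0" by auto
    then have xyN: "x \<in> {1..N}" "y \<in> {1..N}" using S by auto
    show "0 < D y"
    proof (rule ccontr)
      assume "\<not> 0 < D y"
      then have "D y = 0" using D_nonneg[of y] xyN by force
      then have "vecmat N D K y \<le> D x * K x y"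
        using vecmat_le_at_zero[of D y "{x}"] D_nonneg xyN by auto
      also have "\<dots> < 0" using step.IH xy by (simp add: mult_pos_neg)
      finally show False using nonneg xy by force
    qed
  qed (rule \<open>0 < D b\<close>)
qed

end

lemma posdef_Z_matrix_PtP:
  assumes "valid_blowups N ch"
  shows "posdef_Z_matrix N (PtP N ch)"
  by unfold_locales (use PtP_posdef[OF assms] PtP_off_diagonal[OF assms order_refl] in auto)

section \<open>Branches of the dual tree\<close>

definition edges_avoiding :: "nat \<Rightarrow> (nat \<Rightarrow> bchoice) \<Rightarrow> nat \<Rightarrow> (nat \<times> nat) set" where
  "edges_avoiding N ch m =
     {(a, b). a \<in> {1..N} - {m} \<and> b \<in> {1..N} - {m} \<and> a \<noteq> b \<and> dgraph ch N a b}"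

lemma branch_eq:
  "branch N ch m n = (if n \<in> {1..N} - {m} then {w. (n, w) \<in> (edges_avoiding N ch m)\<^sup>*} else {})"
  by (simp add: branch_def Let_def edges_avoiding_def)

lemma branch_self: "branch N ch m m = {}"
  by (simp add: branch_eq)

lemma nbrs_subset: "nbrs N ch m \<subseteq> {1..N} - {m}"
  by (auto simp: nbrs_def)

lemma finite_nbrs: "finite (nbrs N ch m)"
  by (rule finite_subset[OF nbrs_subset]) simp

locale dual_tree =
  fixes N :: nat and ch :: "nat \<Rightarrow> bchoice"
  assumes tree: "tree_on (dgraph ch N) N"
begin

lemma dgraph_edgeD: "dgraph ch N a b \<Longrightarrow> a \<in> {1..N} \<and> b \<in> {1..N} \<and> a \<noteq> b \<and> dgraph ch N b a"
  using tree unfolding tree_on_def by blast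

lemma dgraph_bridge:
  "dgraph ch N a b \<Longrightarrow> (a, b) \<notin> {(x, y). dgraph ch N x y \<and> {x, y} \<noteq> {a, b}}\<^sup>*"
  using tree unfolding tree_on_def by blast

lemma dgraph_connected:
  assumes "a \<in> {1..N}" and "b \<in> {1..N}"
  shows "(a, b) \<in> {(u, v). dgraph ch N u v}\<^sup>*"
proof -
  have "sym ({(u, v). dgraph ch N u v}\<^sup>*)"
    by (rule sym_rtrancl) (auto simp: sym_def dest: dgraph_edgeD)
  moreover have "(1, a) \<in> {(u, v). dgraph ch N u v}\<^sup>*" "(1, b) \<in> {(u, v). dgraph ch N u v}\<^sup>*"
    using tree assms unfolding tree_on_def by blast+
  ultimately show ?thesis by (meson rtrancl_trans symD)
qed

lemma branch_subset: "branch N ch m n \<subseteq> {1..N} - {m}"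
proof
  fix w assume "w \<in> branch N ch m n"
  then have n: "n \<in> {1..N} - {m}" and path: "(n, w) \<in> (edges_avoiding N ch m)\<^sup>*"
    unfolding branch_eq by (auto split: if_splits)
  from path n show "w \<in> {1..N} - {m}"
    by (induction rule: rtrancl_induct) (auto simp: edges_avoiding_def)
qed

lemma finite_branch: "finite (branch N ch m n)"
  by (rule finite_subset[OF branch_subset]) simp

lemma self_mem_branch: "n \<in> {1..N} \<Longrightarrow> n \<noteq> m \<Longrightarrow> n \<in> branch N ch m n"
  unfolding branch_eq by auto

lemma branch_edge_closed:
  assumes l: "l \<in> branch N ch a b" and edge: "dgraph ch N l k" and "k \<noteq> a"
  shows "k \<in> branch N ch a b"
proof -
  have "b \<in> {1..N} - {a}" "(b, l) \<in> (edges_avoiding N ch a)\<^sup>*"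
    using l unfolding branch_eq by (auto split: if_splits)
  moreover have "(l, k) \<in> edges_avoiding N ch a"
    using branch_subset l edge dgraph_edgeD[OF edge] \<open>k \<noteq> a\<close> by (auto simp: edges_avoiding_def)
  ultimately show ?thesis unfolding branch_eq by auto
qed

lemma branch_connected:
  assumes "k \<in> branch N ch a b"
  shows "(b, k) \<in> {(x, y). x \<in> branch N ch a b \<and> y \<in> branch N ch a b \<and> dgraph ch N x y}\<^sup>*"
proof -
  have b: "b \<in> {1..N} - {a}" and path: "(b, k) \<in> (edges_avoiding N ch a)\<^sup>*"
    using assms unfolding branch_eq by (auto split: if_splits)
  from path show ?thesis
  proof (induction rule: rtrancl_induct)
    case (step y z)
    then have "y \<in> branch N ch a b" "z \<in> branch N ch a b"
      using b unfolding branch_eq by (auto intro: rtrancl_into_rtrancl)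
    then show ?case using step by (auto simp: edges_avoiding_def intro: rtrancl_into_rtrancl)
  qed simp
qed

lemma branches_disjoint:
  assumes n: "n \<in> nbrs N ch m" and n': "n' \<in> nbrs N ch m" and "n \<noteq> n'"
  shows "branch N ch m n \<inter> branch N ch m n' = {}"
proof (rule ccontr)
  assume "branch N ch m n \<inter> branch N ch m n' \<noteq> {}"
  then obtain x where "(n, x) \<in> (edges_avoiding N ch m)\<^sup>*" "(n', x) \<in> (edges_avoiding N ch m)\<^sup>*"
    unfolding branch_eq by (auto split: if_splits)
  moreover have "sym ((edges_avoiding N ch m)\<^sup>*)"
    by (rule sym_rtrancl) (auto simp: sym_def edges_avoiding_def dest: dgraph_edgeD)
  ultimately have "(n, n') \<in> (edges_avoiding N ch m)\<^sup>*" by (meson rtrancl_trans symD)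
  \<comment> \<open>together with the edge m n this gives a path from m to n' avoiding the edge m n'\<close>
  moreover let ?A = "{(x, y). dgraph ch N x y \<and> {x, y} \<noteq> {m, n'}}"
  have "edges_avoiding N ch m \<subseteq> ?A" by (auto simp: edges_avoiding_def)
  moreover have "(m, n) \<in> ?A" using n \<open>n \<noteq> n'\<close> by (auto simp: nbrs_def doubleton_eq_iff)
  ultimately have "(m, n') \<in> ?A\<^sup>*"
    by (meson converse_rtrancl_into_rtrancl rtrancl_mono subsetD)
  moreover have "dgraph ch N m n'" using n' by (simp add: nbrs_def)
  ultimately show False using dgraph_bridge by blast
qed

lemma center_not_in_branch:
  assumes n: "n \<in> nbrs N ch m" and j: "j \<in> branch N ch m n"
  shows "m \<notin> branch N ch n j"
proof
  assume "m \<in> branch N ch n j"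
  then have "(j, m) \<in> (edges_avoiding N ch n)\<^sup>*"
    unfolding branch_eq by (auto split: if_splits)
  moreover have "(n, j) \<in> (edges_avoiding N ch m)\<^sup>*"
    using j unfolding branch_eq by (auto split: if_splits)
  moreover let ?A = "{(x, y). dgraph ch N x y \<and> {x, y} \<noteq> {n, m}}"
  have "edges_avoiding N ch m \<subseteq> ?A" "edges_avoiding N ch n \<subseteq> ?A"
    by (auto simp: edges_avoiding_def doubleton_eq_iff)
  ultimately have "(n, m) \<in> ?A\<^sup>*" by (meson rtrancl_mono rtrancl_trans subsetD)
  moreover have "dgraph ch N n m" using n dgraph_edgeD by (auto simp: nbrs_def)
  ultimately show False using dgraph_bridge by blast
qed

lemma nbr_not_in_branch:
  assumes n: "n \<in> nbrs N ch m" and n': "n' \<in> nbrs N ch m" and j: "j \<in> branch N ch m n"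
  shows "n' \<notin> branch N ch n j"
proof
  assume n'_mem: "n' \<in> branch N ch n j"
  then have "n' \<noteq> n" using branch_subset by auto
  moreover have "dgraph ch N n' m" using n' dgraph_edgeD by (auto simp: nbrs_def)
  ultimately have "m \<in> branch N ch n j"
    using branch_edge_closed[OF n'_mem] n by (auto simp: nbrs_def)
  then show False using center_not_in_branch[OF n j] by blast
qed

lemma branch_cover:
  assumes m: "m \<in> {1..N}" and i: "i \<in> {1..N}" "i \<noteq> m"
  shows "\<exists>n\<in>nbrs N ch m. i \<in> branch N ch m n"
proof -
  have "i = m \<or> (\<exists>n\<in>nbrs N ch m. i \<in> branch N ch m n)"
    using dgraph_connected[OF m i(1)]
  proof (induction rule: rtrancl_induct)
    case (step x y)
    then have edge: "dgraph ch N x y" by simp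
    show ?case
    proof (cases "x = m")
      case True
      then show ?thesis using edge dgraph_edgeD[OF edge] self_mem_branch by (auto simp: nbrs_def)
    next
      case False
      then show ?thesis using step.IH branch_edge_closed edge by blast
    qed
  qed simp
  then show ?thesis using i by blast
qed

end

lemma vecmat_unitv: "a \<in> {1..N} \<Longrightarrow> vecmat N (unitv a) M n = M a n"
proof -
  assume a: "a \<in> {1..N}"
  have "vecmat N (unitv a) M n = (\<Sum>c\<in>{1..N}. if c = a then M a n else 0)"
    unfolding vecmat_def unitv_def by (rule sum.cong) auto
  then show ?thesis using a by simp
qed

lemma vecmat_rhat:
  "a \<in> {1..N} \<Longrightarrow> b \<in> {1..N} \<Longrightarrow> vecmat N (rhat M a b) M n = M b n - rho M a b a * M a n"
proof -
  assume a: "a \<in> {1..N}" and b: "b \<in> {1..N}"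
  have "vecmat N (rhat M a b) M n = vecmat N (unitv b) M n - rho M a b a * vecmat N (unitv a) M n"
    unfolding vecmat_def rhat_def
    by (simp add: sum_subtractf sum_distrib_left left_diff_distrib mult.assoc)
  then show ?thesis using vecmat_unitv[OF a] vecmat_unitv[OF b] by simp
qed

lemma vecmat_vecmat_PtP:
  assumes valuation: "is_valuation_matrix N ch M" and k: "k \<in> {1..N}"
  shows "vecmat N (vecmat N x M) (PtP N ch) k = x k"
proof -
  have "vecmat N (vecmat N x M) (PtP N ch) k
      = (\<Sum>n\<in>{1..N}. \<Sum>a\<in>{1..N}. x a * (M a n * PtP N ch n k))"
    unfolding vecmat_def sum_distrib_right by (simp add: mult.assoc)
  also have "\<dots> = (\<Sum>a\<in>{1..N}. x a * (\<Sum>n\<in>{1..N}. M a n * PtP N ch n k))"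
    by (subst sum.swap) (simp add: sum_distrib_left)
  also have "\<dots> = (\<Sum>a\<in>{1..N}. if a = k then x a else 0)"
    using valuation k unfolding is_valuation_matrix_def by (intro sum.cong) auto
  also have "\<dots> = x k" using k by simp
  finally show ?thesis .
qed

locale blowup_sequence =
  fixes N :: nat and ch :: "nat \<Rightarrow> bchoice"
  assumes valid: "valid_blowups N ch"

sublocale blowup_sequence \<subseteq> dual_tree
  by unfold_locales (rule tree_on_dgraph[OF valid order_refl])

sublocale blowup_sequence \<subseteq> posdef_Z_matrix N "PtP N ch"
  by (rule posdef_Z_matrix_PtP[OF valid])

context blowup_sequence
begin

lemma PtP_edge:
  assumes "dgraph ch N a b"
  shows "PtP N ch a b = -1"
proof -
  have "a \<in> {1..N}" "b \<in> {1..N}" "a \<noteq> b"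
    using dgraph_edgeD[OF assms] by auto
  then show ?thesis using PtP_off_diagonal[OF valid order_refl] assms by simp
qed

lemma rtrancl_dgraph_PtP_neg:
  assumes "(x, y) \<in> {(u, v). u \<in> S \<and> v \<in> S \<and> dgraph ch N u v}\<^sup>*"
  shows "(x, y) \<in> {(u, v). u \<in> S \<and> v \<in> S \<and> PtP N ch u v < 0}\<^sup>*"
proof -
  have "{(u, v). u \<in> S \<and> v \<in> S \<and> dgraph ch N u v}
      \<subseteq> {(u, v). u \<in> S \<and> v \<in> S \<and> PtP N ch u v < 0}"
    using PtP_edge by auto
  then show ?thesis using assms rtrancl_mono by blast
qed

end

locale valuation_matrix = blowup_sequence +
  fixes M :: "nat \<Rightarrow> nat \<Rightarrow> rat"
  assumes valuation: "is_valuation_matrix N ch M"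
begin

lemma valuation_matrix_pos:
  assumes a: "a \<in> {1..N}" and n: "n \<in> {1..N}"
  shows "0 < M a n"
proof -
  have edges: "{(u, v). dgraph ch N u v}
      = {(u, v). u \<in> {1..N} \<and> v \<in> {1..N} \<and> dgraph ch N u v}"
    using dgraph_edgeD by auto
  have "(a, n) \<in> {(u, v). u \<in> {1..N} \<and> v \<in> {1..N} \<and> dgraph ch N u v}\<^sup>*"
    using dgraph_connected[OF a n] by (metis edges)
  then have path: "(a, n) \<in> {(u, v). u \<in> {1..N} \<and> v \<in> {1..N} \<and> PtP N ch u v < 0}\<^sup>*"
    by (rule rtrancl_dgraph_PtP_neg)
  have "0 < vecmat N (unitv a) M n"
  proof (rule pos_if_vecmat_pos[where S = "{1..N}" and b = a and D = "vecmat N (unitv a) M"])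
    show "0 \<le> vecmat N (vecmat N (unitv a) M) (PtP N ch) k" if "k \<in> {1..N}" for k
      using vecmat_vecmat_PtP[OF valuation that] by (simp add: unitv_def)
    show "0 < vecmat N (vecmat N (unitv a) M) (PtP N ch) a"
      using vecmat_vecmat_PtP[OF valuation a] by (simp add: unitv_def)
  qed (use a path in auto)
  then show ?thesis using vecmat_unitv[OF a] by simp
qed

lemma rhat_self: "a \<in> {1..N} \<Longrightarrow> rhat M a a = (\<lambda>_. 0)"
  using valuation_matrix_pos[of a a] by (auto simp: rhat_def rho_def unitv_def)

text \<open>D = (rhat M a b) M vanishes at a by the choice of \<rho>, and D P^T P = rhat M a b is
  supported on {a, b} with value 1 at b; the maximum principle makes D vanish off the branch
  and positive on it.\<close>
lemma vecmat_rhat_branch: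
  assumes a: "a \<in> {1..N}" and b: "b \<in> {1..N}" and "a \<noteq> b" and x: "x \<in> {1..N}"
  shows "(x \<in> branch N ch a b \<longrightarrow> 0 < vecmat N (rhat M a b) M x)
       \<and> (x \<notin> branch N ch a b \<longrightarrow> vecmat N (rhat M a b) M x = 0)"
proof -
  define D where "D = vecmat N (rhat M a b) M"
  define B where "B = branch N ch a b"
  have Da: "D a = 0"
    using vecmat_rhat[OF a b, of M a] valuation_matrix_pos[OF a a] unfolding D_def rho_def by simp
  have DK: "vecmat N D (PtP N ch) k = rhat M a b k" if "k \<in> {1..N}" for k
    unfolding D_def using vecmat_vecmat_PtP[OF valuation that] .
  have bB: "b \<in> B" unfolding B_def using self_mem_branch[OF b] \<open>a \<noteq> b\<close> by auto
  have B_sub: "B \<subseteq> {1..N} - {a}" unfolding B_def by (rule branch_subset)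
  have D_outside: "D k = 0" if k: "k \<in> {1..N} - B - {a}" for k
  proof (rule zero_if_vecmat_zero[where C = "{1..N} - B - {a}"])
    fix l k assume l: "l \<in> {1..N} - ({1..N} - B - {a})" and k: "k \<in> {1..N} - B - {a}"
    show "D l * PtP N ch l k = 0"
    proof (cases "l = a")
      case False
      then have "l \<in> B" using l by auto
      then have "\<not> dgraph ch N l k"
        using branch_edge_closed k unfolding B_def by blast
      moreover have "l \<noteq> k" using \<open>l \<in> B\<close> k by auto
      ultimately show ?thesis
        using PtP_off_diagonal[OF valid order_refl, of l k] \<open>l \<in> B\<close> B_sub k by auto
    qed (simp add: Da)
  qed (use that DK bB in \<open>auto simp: rhat_def unitv_def\<close>)
  have D_inside: "0 < D k" if k: "k \<in> B" for k
  proof (rule pos_if_vecmat_pos[OF _ bB])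
    show "B \<subseteq> {1..N}" using B_sub by auto
    show "D k = 0" if "k \<in> {1..N}" "k \<notin> B" for k
      using D_outside Da that by blast
    show "0 \<le> vecmat N D (PtP N ch) k" if "k \<in> B" for k
    proof -
      have "k \<in> {1..N}" "k \<noteq> a" using B_sub that by auto
      then show ?thesis using DK by (simp add: rhat_def unitv_def)
    qed
    show "0 < vecmat N D (PtP N ch) b" using DK b \<open>a \<noteq> b\<close> by (simp add: rhat_def unitv_def)
    show "(b, k) \<in> {(x, y). x \<in> B \<and> y \<in> B \<and> PtP N ch x y < 0}\<^sup>*"
      using branch_connected[OF k[unfolded B_def]] rtrancl_dgraph_PtP_neg
      unfolding B_def by blast
  qed
  show ?thesis using D_inside D_outside Da x unfolding D_def B_def by blast
qed

lemma vecmat_rhat_nonneg: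
  assumes "a \<in> {1..N}" "b \<in> {1..N}" "x \<in> {1..N}"
  shows "0 \<le> vecmat N (rhat M a b) M x"
  using vecmat_rhat_branch[OF assms(1,2) _ assms(3)] rhat_self[OF assms(1)]
  by (cases "a = b") (auto simp: vecmat_def less_imp_le)

lemma vecmat_rhat_pos_iff:
  assumes "a \<in> {1..N}" "b \<in> {1..N}" "x \<in> {1..N}"
  shows "0 < vecmat N (rhat M a b) M x \<longleftrightarrow> x \<in> branch N ch a b"
  using vecmat_rhat_branch[OF assms(1,2) _ assms(3)] rhat_self[OF assms(1)]
  by (cases "a = b") (auto simp: vecmat_def branch_self)

lemma rho_eq_outside_branch:
  assumes a: "a \<in> {1..N}" and b: "b \<in> {1..N}" and x: "x \<in> {1..N}"
    and "x \<notin> branch N ch a b"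
  shows "rho M a b x = rho M a b a"
proof -
  have "M b x - rho M a b a * M a x = 0"
    using vecmat_rhat_pos_iff[OF a b x] vecmat_rhat_nonneg[OF a b x] vecmat_rhat[OF a b] assms(4)
    by force
  then show ?thesis using valuation_matrix_pos[OF a x] by (simp add: rho_def field_simps)
qed

end

lemma vecmat_sum: "vecmat N (\<lambda>k. \<Sum>s\<in>A. v s k) M i = (\<Sum>s\<in>A. vecmat N (v s) M i)"
  unfolding vecmat_def by (simp add: sum_distrib_right) (rule sum.swap)

lemma vecmat_scale: "vecmat N (\<lambda>k. c * v k) M i = c * vecmat N v M i"
  unfolding vecmat_def by (simp add: sum_distrib_left mult.assoc)

lemma vecmat_diff_add:
  "vecmat N (\<lambda>k. u k - v k + w k) M i = vecmat N u M i - vecmat N v M i + vecmat N w M i"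
  unfolding vecmat_def by (simp add: algebra_simps sum.distrib sum_subtractf)

lemma vecmat_fmod:
  "vecmat N (fmod N ch M m fh gh hh) M i = vecmat N fh M i
     - (\<Sum>n\<in>nbrs N ch m. \<Sum>j\<in>branch N ch m n. gh j * vecmat N (rhat M n j) M i)
     + (\<Sum>n\<in>nbrs N ch m. hh n * vecmat N (rhat M m n) M i)"
proof -
  have "fmod N ch M m fh gh hh = (\<lambda>k. fh k
          - (\<Sum>n\<in>nbrs N ch m. \<Sum>j\<in>branch N ch m n. gh j * rhat M n j k)
          + (\<Sum>n\<in>nbrs N ch m. hh n * rhat M m n k))"
    by (rule ext) (simp add: fmod_def)
  then show ?thesis by (simp only: vecmat_diff_add vecmat_sum vecmat_scale)
qed

lemma phi_mult: "M e n \<noteq> 0 \<Longrightarrow> phi N M a b e n * M e n = vecmat N (rhat M a b) M n"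
  by (simp add: phi_def)

lemma sum_pos_iff_ex_pos:
  fixes f :: "'a \<Rightarrow> 'b::ordered_comm_monoid_add"
  assumes "finite A" and "\<And>x. x \<in> A \<Longrightarrow> 0 \<le> f x"
  shows "0 < sum f A \<longleftrightarrow> (\<exists>x\<in>A. 0 < f x)"
  using assms sum_nonneg[of A f] sum_nonneg_eq_0_iff[of A f] by (auto simp: order_less_le)

context dual_tree
begin

lemma sum_branch_rhat:
  assumes "n \<noteq> i"
  shows "(\<Sum>j\<in>branch N ch m n. gh j * rhat M n j i) = (if i \<in> branch N ch m n then gh i else 0)"
proof -
  have "(\<Sum>j\<in>branch N ch m n. gh j * rhat M n j i) = (\<Sum>j\<in>branch N ch m n. if j = i then gh i else 0)"
    using assms by (intro sum.cong) (auto simp: rhat_def unitv_def)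
  then show ?thesis using finite_branch by simp
qed

lemma fmod_center:
  "fmod N ch M m fh gh hh m = fh m - (\<Sum>n\<in>nbrs N ch m. rho M m n m * hh n)"
proof -
  have "(\<Sum>n\<in>nbrs N ch m. \<Sum>j\<in>branch N ch m n. gh j * rhat M n j m) = 0"
    using branch_subset[of m] nbrs_subset[of N ch m]
    by (intro sum.neutral ballI) (auto simp: rhat_def unitv_def)
  moreover have "(\<Sum>n\<in>nbrs N ch m. hh n * rhat M m n m) = - (\<Sum>n\<in>nbrs N ch m. rho M m n m * hh n)"
    unfolding sum_negf[symmetric] using nbrs_subset[of N ch m]
    by (intro sum.cong) (auto simp: rhat_def unitv_def)
  ultimately show ?thesis by (simp add: fmod_def)
qed

lemma fmod_off_nbrs:
  assumes m: "m \<in> {1..N}" and i: "i \<in> {1..N}" "i \<noteq> m" "i \<notin> nbrs N ch m"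
  shows "fmod N ch M m fh gh hh i = fh i - gh i"
proof -
  obtain n0 where n0: "n0 \<in> nbrs N ch m" "i \<in> branch N ch m n0" using branch_cover[OF m i(1,2)] by blast
  have "(\<Sum>j\<in>branch N ch m n. gh j * rhat M n j i) = (if n = n0 then gh i else 0)"
    if n: "n \<in> nbrs N ch m" for n
  proof -
    have "n \<noteq> i" using n i by auto
    then show ?thesis using sum_branch_rhat[of n i] branches_disjoint[OF n n0(1)] n0(2) by auto
  qed
  then have "(\<Sum>n\<in>nbrs N ch m. \<Sum>j\<in>branch N ch m n. gh j * rhat M n j i) = gh i"
    using n0(1) finite_nbrs by simp
  moreover have "(\<Sum>n\<in>nbrs N ch m. hh n * rhat M m n i) = 0"
    using i by (intro sum.neutral) (auto simp: rhat_def unitv_def)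
  ultimately show ?thesis by (simp add: fmod_def)
qed

end

context valuation_matrix
begin

lemma fmod_nbr:
  assumes m: "m \<in> {1..N}" and i: "i \<in> nbrs N ch m"
  shows "fmod N ch M m fh gh hh i = fh i + hh i + (\<Sum>j\<in>branch N ch m i - {i}. rho M i j m * gh j)"
proof -
  have iN: "i \<in> {1..N}" "i \<noteq> m" using i nbrs_subset[of N ch m] by auto
  have i_mem: "i \<in> branch N ch m i" using self_mem_branch iN by simp
  have "(\<Sum>j\<in>branch N ch m n. gh j * rhat M n j i) = 0" if "n \<in> nbrs N ch m - {i}" for n
    using sum_branch_rhat[of n i] branches_disjoint[of n m i] i_mem that i by auto
  then have "(\<Sum>n\<in>nbrs N ch m. \<Sum>j\<in>branch N ch m n. gh j * rhat M n j i)
      = (\<Sum>j\<in>branch N ch m i. gh j * rhat M i j i)"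
    using sum.remove[OF finite_nbrs i, of "\<lambda>n. \<Sum>j\<in>branch N ch m n. gh j * rhat M n j i"] by simp
  also have "\<dots> = (\<Sum>j\<in>branch N ch m i - {i}. gh j * rhat M i j i)"
    using sum.remove[OF finite_branch i_mem, of "\<lambda>j. gh j * rhat M i j i"] rhat_self[OF iN(1)]
    by simp
  also have "\<dots> = - (\<Sum>j\<in>branch N ch m i - {i}. rho M i j m * gh j)"
    unfolding sum_negf[symmetric]
  proof (intro sum.cong refl)
    fix j assume j: "j \<in> branch N ch m i - {i}"
    then have "j \<in> {1..N}" using branch_subset by blast
    then have "rho M i j m = rho M i j i"
      using rho_eq_outside_branch[OF iN(1) _ m] center_not_in_branch[OF i] j by blast
    then show "gh j * rhat M i j i = - (rho M i j m * gh j)" using j by (simp add: rhat_def unitv_def)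
  qed
  finally have "(\<Sum>n\<in>nbrs N ch m. \<Sum>j\<in>branch N ch m n. gh j * rhat M n j i)
      = - (\<Sum>j\<in>branch N ch m i - {i}. rho M i j m * gh j)" .
  moreover have "(\<Sum>n\<in>nbrs N ch m. hh n * rhat M m n i) = hh i"
    using iN i finite_nbrs by (simp add: rhat_def unitv_def if_distrib[of "\<lambda>x. hh _ * x"] cong: if_cong)
  ultimately show ?thesis by (simp add: fmod_def)
qed

lemma vecmat_fmod_phi:
  assumes "m \<in> {1..N}" and "i \<in> {1..N}"
  shows "vecmat N (fmod N ch M m fh gh hh) M i = vecmat N fh M i
     - (\<Sum>n\<in>nbrs N ch m. \<Sum>j\<in>branch N ch m n. gh j * phi N M n j m i * M m i)
     + (\<Sum>n\<in>nbrs N ch m. hh n * phi N M m n m i * M m i)"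
  using vecmat_fmod phi_mult valuation_matrix_pos[OF assms] by (simp add: mult.assoc)

lemma vecmat_fmod_decrease:
  assumes gh: "\<And>j. j \<in> {1..N} \<Longrightarrow> 0 \<le> gh j" and i: "i \<in> {1..N}"
  shows "vecmat N (fmod N ch M m fh gh (\<lambda>_. 0)) M i \<le> vecmat N fh M i"
    and "vecmat N (fmod N ch M m fh gh (\<lambda>_. 0)) M i < vecmat N fh M i \<longleftrightarrow>
           (\<exists>n\<in>nbrs N ch m. \<exists>j\<in>branch N ch m n. 0 < gh j \<and> i \<in> branch N ch n j)"
    and "i = m \<or> i \<in> nbrs N ch m \<Longrightarrow> vecmat N (fmod N ch M m fh gh (\<lambda>_. 0)) M i = vecmat N fh M i"
proof -
  let ?T = "\<lambda>n j. gh j * vecmat N (rhat M n j) M i"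
  have T: "0 \<le> ?T n j \<and> (0 < ?T n j \<longleftrightarrow> 0 < gh j \<and> i \<in> branch N ch n j)"
    if "n \<in> nbrs N ch m" "j \<in> branch N ch m n" for n j
  proof -
    have "n \<in> {1..N}" "j \<in> {1..N}" using that nbrs_subset[of N ch m] branch_subset by blast+
    then show ?thesis
      using vecmat_rhat_nonneg[of n j i] vecmat_rhat_pos_iff[of n j i] gh[of j] i
      by (auto simp: zero_less_mult_iff)
  qed
  have inner: "0 \<le> (\<Sum>j\<in>branch N ch m n. ?T n j) \<and> (0 < (\<Sum>j\<in>branch N ch m n. ?T n j)
      \<longleftrightarrow> (\<exists>j\<in>branch N ch m n. 0 < gh j \<and> i \<in> branch N ch n j))"
    if "n \<in> nbrs N ch m" for n
    using T[OF that] sum_pos_iff_ex_pos[OF finite_branch, where f = "?T n"] by (simp add: sum_nonneg)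
  have "0 \<le> (\<Sum>n\<in>nbrs N ch m. \<Sum>j\<in>branch N ch m n. ?T n j)"
    using inner by (simp add: sum_nonneg)
  moreover have "0 < (\<Sum>n\<in>nbrs N ch m. \<Sum>j\<in>branch N ch m n. ?T n j)
      \<longleftrightarrow> (\<exists>n\<in>nbrs N ch m. \<exists>j\<in>branch N ch m n. 0 < gh j \<and> i \<in> branch N ch n j)"
    using inner sum_pos_iff_ex_pos[OF finite_nbrs, where f = "\<lambda>n. \<Sum>j\<in>branch N ch m n. ?T n j"]
    by simp
  moreover have "\<not> (\<exists>n\<in>nbrs N ch m. \<exists>j\<in>branch N ch m n. 0 < gh j \<and> i \<in> branch N ch n j)"
    if "i = m \<or> i \<in> nbrs N ch m"
    using that center_not_in_branch nbr_not_in_branch by blast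
  moreover have "vecmat N (fmod N ch M m fh gh (\<lambda>_. 0)) M i
      = vecmat N fh M i - (\<Sum>n\<in>nbrs N ch m. \<Sum>j\<in>branch N ch m n. ?T n j)"
    by (simp add: vecmat_fmod)
  ultimately show "vecmat N (fmod N ch M m fh gh (\<lambda>_. 0)) M i \<le> vecmat N fh M i"
    and "vecmat N (fmod N ch M m fh gh (\<lambda>_. 0)) M i < vecmat N fh M i \<longleftrightarrow>
           (\<exists>n\<in>nbrs N ch m. \<exists>j\<in>branch N ch m n. 0 < gh j \<and> i \<in> branch N ch n j)"
    and "i = m \<or> i \<in> nbrs N ch m \<Longrightarrow> vecmat N (fmod N ch M m fh gh (\<lambda>_. 0)) M i = vecmat N fh M i"
    by auto
qed

lemma vecmat_fmod_increase:
  assumes m: "m \<in> {1..N}" and hh: "\<And>j. j \<in> {1..N} \<Longrightarrow> 0 \<le> hh j" and i: "i \<in> {1..N}"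
  shows "vecmat N fh M i \<le> vecmat N (fmod N ch M m fh (\<lambda>_. 0) hh) M i"
    and "vecmat N fh M i < vecmat N (fmod N ch M m fh (\<lambda>_. 0) hh) M i \<longleftrightarrow>
           (\<exists>n\<in>nbrs N ch m. 0 < hh n \<and> i \<in> branch N ch m n)"
proof -
  let ?T = "\<lambda>n. hh n * vecmat N (rhat M m n) M i"
  have "0 \<le> ?T n \<and> (0 < ?T n \<longleftrightarrow> 0 < hh n \<and> i \<in> branch N ch m n)"
    if "n \<in> nbrs N ch m" for n
  proof -
    have "n \<in> {1..N}" using that nbrs_subset[of N ch m] by blast
    then show ?thesis
      using vecmat_rhat_nonneg[OF m _ i] vecmat_rhat_pos_iff[OF m _ i] hh[of n]
      by (auto simp: zero_less_mult_iff)
  qed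
  then have "0 \<le> (\<Sum>n\<in>nbrs N ch m. ?T n)"
    and "0 < (\<Sum>n\<in>nbrs N ch m. ?T n) \<longleftrightarrow> (\<exists>n\<in>nbrs N ch m. 0 < hh n \<and> i \<in> branch N ch m n)"
    using sum_pos_iff_ex_pos[OF finite_nbrs, where f = ?T] by (simp_all add: sum_nonneg)
  moreover have "vecmat N (fmod N ch M m fh (\<lambda>_. 0) hh) M i = vecmat N fh M i + (\<Sum>n\<in>nbrs N ch m. ?T n)"
    by (simp add: vecmat_fmod)
  ultimately show "vecmat N fh M i \<le> vecmat N (fmod N ch M m fh (\<lambda>_. 0) hh) M i"
    and "vecmat N fh M i < vecmat N (fmod N ch M m fh (\<lambda>_. 0) hh) M i \<longleftrightarrow>
           (\<exists>n\<in>nbrs N ch m. 0 < hh n \<and> i \<in> branch N ch m n)"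
    by auto
qed

end

theorem mainTheorem10:
  fixes N :: nat and ch :: "nat \<Rightarrow> bchoice" and V :: "nat \<Rightarrow> nat \<Rightarrow> rat"
    and m :: nat and fh gh hh :: "nat \<Rightarrow> rat"
  assumes "N \<ge> 1" and "valid_blowups N ch" and "is_valuation_matrix N ch V"
    and "m \<in> {1..N}"
  defines "f \<equiv> vecmat N fh V"
    and "fg \<equiv> vecmat N (fmod N ch V m fh gh (\<lambda>_. 0)) V"
    and "fhh \<equiv> vecmat N (fmod N ch V m fh (\<lambda>_. 0) hh) V"
  shows
    "(\<forall>i\<in>{1..N}. fmod N ch V m fh gh hh i =
        (if i = m then fh m - (\<Sum>n\<in>nbrs N ch m. rho V m n m * hh n)
         else if i \<in> nbrs N ch m then
           fh i + hh i + (\<Sum>j\<in>branch N ch m i - {i}. rho V i j m * gh j)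
         else fh i - gh i))
     \<and> (\<forall>i\<in>{1..N}. fg i =
          f i - (\<Sum>n\<in>nbrs N ch m. \<Sum>j\<in>branch N ch m n. gh j * phi N V n j m i * V m i))
     \<and> (\<forall>i\<in>{1..N}. fhh i =
          f i + (\<Sum>n\<in>nbrs N ch m. hh n * phi N V m n m i * V m i))
     \<and> ((\<forall>j\<in>{1..N}. 0 \<le> gh j) \<longrightarrow>
          (\<forall>i\<in>{1..N}. fg i \<le> f i
             \<and> (fg i < f i \<longleftrightarrow>
                  (\<exists>n\<in>nbrs N ch m. \<exists>j\<in>branch N ch m n. 0 < gh j \<and> i \<in> branch N ch n j))
             \<and> ((i = m \<or> i \<in> nbrs N ch m) \<longrightarrow> fg i = f i)))
     \<and> ((\<forall>j\<in>{1..N}. 0 \<le> hh j) \<longrightarrow>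
          (\<forall>i\<in>{1..N}. f i \<le> fhh i
             \<and> (f i < fhh i \<longleftrightarrow> (\<exists>n\<in>nbrs N ch m. 0 < hh n \<and> i \<in> branch N ch m n))))"
proof -
  interpret valuation_matrix N ch V
    using assms(2,3) by unfold_locales
  have m: "m \<in> {1..N}" by fact
  have "fmod N ch V m fh gh hh i =
        (if i = m then fh m - (\<Sum>n\<in>nbrs N ch m. rho V m n m * hh n)
         else if i \<in> nbrs N ch m then fh i + hh i + (\<Sum>j\<in>branch N ch m i - {i}. rho V i j m * gh j)
         else fh i - gh i)" if "i \<in> {1..N}" for i
    using fmod_center fmod_nbr[OF m] fmod_off_nbrs[OF m that] by auto
  moreover have "fg i = f i - (\<Sum>n\<in>nbrs N ch m. \<Sum>j\<in>branch N ch m n. gh j * phi N V n j m i * V m i)"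
    and "fhh i = f i + (\<Sum>n\<in>nbrs N ch m. hh n * phi N V m n m i * V m i)"
    if "i \<in> {1..N}" for i
    unfolding f_def fg_def fhh_def using vecmat_fmod_phi[OF m that] by simp_all
  moreover note vecmat_fmod_decrease[where gh = gh and m = m and fh = fh, folded f_def fg_def]
    vecmat_fmod_increase[OF m, where hh = hh and fh = fh, folded f_def fhh_def]
  ultimately show ?thesis by blast
qed

end
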